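(* Let $Y=\{(x,y)\in\mathbb{R}^2:(x/a)^2+y^2=1\}$ with $a>1$. The map $h:Y\to Y$ is bijective if and only if $a\le\sqrt2$.
   Context: $h:Y\to Y$ sends $p\in Y$ to the unique point of the intersection of the normal line to $Y$ at $p$ with $Y\setminus\{p\}$. *)

theory Defs
  imports Complex_Main
begin

definition ellipse :: "real \<Rightarrow> (real \<times> real) set" where
  "ellipse a = {(x, y). (x / a)^2 + y^2 = 1}"

text \<open>Normal line to Y at p: the line through p in the direction of the gradient
  of F(x,y) = (x/a)^2 + y^2 - 1, i.e. of (2x/a^2, 2y).\<close>
definition normal_line :: "real \<Rightarrow> real \<times> real \<Rightarrow> (real \<times> real) set" where
  "normal_line a p = {(fst p + t * (fst p / a^2), snd p + t * snd p) | t. True}"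

definition normal_map :: "real \<Rightarrow> real \<times> real \<Rightarrow> real \<times> real" where
  "normal_map a p = (THE q. q \<in> normal_line a p \<inter> (ellipse a - {p}))"

end

theory Submission
  imports Defs
begin

text \<open>Write \<open>b = a\<^sup>2\<close> and \<open>u = (x/a)\<^sup>2 \<in> [0,1]\<close>. Solving the quadratic for the normal line
  at \<open>p = (x,y)\<close> gives \<open>h p = (x \<alpha>(u), y \<beta>(u))\<close> with explicit rational \<open>\<alpha>, \<beta>\<close> and
  \<open>\<beta> < 0\<close>. The image point has \<open>(X/a)\<^sup>2 = g(u) = u \<alpha>(u)\<^sup>2\<close>, which runs continuously from
  \<open>g 0 = 0\<close> to \<open>g 1 = 1\<close>, so \<open>h\<close> is onto for every \<open>a > 1\<close>. If \<open>b \<le> 2\<close>, then \<open>\<alpha> \<le> 0\<close>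
  is nonincreasing, so \<open>g\<close> is strictly increasing and \<open>h p\<close> determines \<open>u\<close> and then \<open>p\<close>.
  If \<open>b > 2\<close>, the normals at \<open>(0,1)\<close> and at the point with \<open>y = 1/(b-1)\<close> both pass
  through \<open>(0,-1)\<close>.\<close>

lemma ellipse_iff: "(x, y) \<in> ellipse a \<longleftrightarrow> y^2 = 1 - (x / a)^2"
  unfolding ellipse_def by auto

lemma ellipse_x_sq_le_1: "(x, y) \<in> ellipse a \<Longrightarrow> (x / a)^2 \<le> 1"
  unfolding ellipse_iff by (metis diff_ge_0_iff_ge zero_le_power2)

lemma convex_comb_1_pos:
  fixes c u :: real
  assumes "0 < c" "0 \<le> u" "u \<le> 1"
  shows "0 < u + c - u * c"
proof -
  have "u + c - u * c = u * 1 + (1 - u) * c" by (simp add: algebra_simps)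
  moreover have "0 < u * 1 + (1 - u) * c"
    using assms by (cases "u = 0") (auto intro: add_pos_nonneg)
  ultimately show ?thesis by simp
qed

text \<open>The parameter \<open>t \<noteq> 0\<close> of the second intersection \<open>(x + t x/b, y + t y)\<close> of the normal
  line at \<open>(x,y)\<close> with the ellipse, where \<open>b = a\<^sup>2\<close> and \<open>u = (x/a)\<^sup>2\<close>.\<close>
definition normal_param :: "real \<Rightarrow> real \<Rightarrow> real" where
  "normal_param b u = - 2 * b * (u + b - u * b) / (u + b^2 - u * b^2)"

definition normal_scale_x :: "real \<Rightarrow> real \<Rightarrow> real" where
  "normal_scale_x b u = 1 + normal_param b u / b"

definition normal_scale_y :: "real \<Rightarrow> real \<Rightarrow> real" where
  "normal_scale_y b u = 1 + normal_param b u"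

lemma normal_param_denom_pos:
  fixes b u :: real
  assumes "b \<noteq> 0" "0 \<le> u" "u \<le> 1"
  shows "0 < u + b^2 - u * b^2"
  using convex_comb_1_pos[of "b^2" u] assms by simp

lemma normal_param_neg:
  assumes "0 < b" "0 \<le> u" "u \<le> 1"
  shows "normal_param b u < 0"
  unfolding normal_param_def
  using convex_comb_1_pos[of b u] normal_param_denom_pos[of b u] assms by simp

lemma normal_line_point_in_ellipse_iff:
  assumes "a \<noteq> 0" and p: "(x, y) \<in> ellipse a"
  shows "(x + t * (x / a^2), y + t * y) \<in> ellipse a \<longleftrightarrow>
    t = 0 \<or> t = normal_param (a^2) ((x / a)^2)"
proof -
  define b where "b = a^2"
  define u where "u = (x / a)^2"
  have u: "0 \<le> u" "u \<le> 1" using ellipse_x_sq_le_1[OF p] by (simp_all add: u_def)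
  have R: "0 < u + b^2 - u * b^2" using normal_param_denom_pos[of b, OF _ u] assms by (simp add: b_def)
  have "(x + t * (x / a^2)) / a = (x / a) * (1 + t / b)"
    using assms by (simp add: b_def field_simps)
  hence "((x + t * (x / a^2)) / a)^2 = u * (1 + t / b)^2"
    by (simp only: u_def power_mult_distrib)
  moreover have "(y + t * y)^2 = (1 - u) * (1 + t)^2"
    using p unfolding ellipse_iff u_def by (metis distrib_left mult.commute mult_1 power_mult_distrib)
  ultimately have "(x + t * (x / a^2), y + t * y) \<in> ellipse a \<longleftrightarrow>
      u * (1 + t / b)^2 + (1 - u) * (1 + t)^2 = 1"
    unfolding ellipse_def by simp
  also have "\<dots> \<longleftrightarrow> t * (2 * b * (u + b - u * b) + t * (u + b^2 - u * b^2)) = 0"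
    using assms by (simp add: b_def field_simps power2_eq_square) algebra
  also have "\<dots> \<longleftrightarrow> t = 0 \<or> t = normal_param b u"
  proof -
    have "u + b^2 - u * b^2 \<noteq> 0" using R by linarith
    hence "2 * b * (u + b - u * b) + t * (u + b^2 - u * b^2) = 0 \<longleftrightarrow> t = normal_param b u"
      unfolding normal_param_def by (auto simp: field_simps)
    thus ?thesis by simp
  qed
  finally show ?thesis by (simp add: b_def u_def)
qed

lemma normal_line_inter_ellipse:
  assumes "a \<noteq> 0" and p: "(x, y) \<in> ellipse a"
  shows "normal_line a (x, y) \<inter> (ellipse a - {(x, y)}) =
    {(x * normal_scale_x (a^2) ((x / a)^2), y * normal_scale_y (a^2) ((x / a)^2))}"
proof -
  define t0 where "t0 = normal_param (a^2) ((x / a)^2)"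
  have "t0 \<noteq> 0"
    using normal_param_neg[of "a^2" "(x / a)^2"] ellipse_x_sq_le_1[OF p] assms by (simp add: t0_def)
  moreover have "x \<noteq> 0 \<or> y \<noteq> 0" using p by (auto simp: ellipse_iff)
  hence "(x + t * (x / a^2), y + t * y) = (x, y) \<longleftrightarrow> t = 0" for t
    using assms by auto
  ultimately have "normal_line a (x, y) \<inter> (ellipse a - {(x, y)}) = {(x + t0 * (x / a^2), y + t0 * y)}"
    using normal_line_point_in_ellipse_iff[OF assms, folded t0_def]
    unfolding normal_line_def fst_conv snd_conv by (auto 0 3)
  moreover have "x + t0 * (x / a^2) = x * normal_scale_x (a^2) ((x / a)^2)"
    "y + t0 * y = y * normal_scale_y (a^2) ((x / a)^2)"
    by (simp_all add: t0_def normal_scale_x_def normal_scale_y_def algebra_simps)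
  ultimately show ?thesis by simp
qed

lemma normal_map_eq:
  assumes "a \<noteq> 0" and "(x, y) \<in> ellipse a"
  shows "normal_map a (x, y) = (x * normal_scale_x (a^2) ((x / a)^2), y * normal_scale_y (a^2) ((x / a)^2))"
  unfolding normal_map_def normal_line_inter_ellipse[OF assms] by simp

lemma normal_map_eqI:
  assumes "a \<noteq> 0" and "p \<in> ellipse a" and "q \<in> normal_line a p" "q \<in> ellipse a" "q \<noteq> p"
  shows "normal_map a p = q"
proof -
  obtain x y where p: "p = (x, y)" by fastforce
  have e: "(x, y) \<in> ellipse a" using assms(2) p by simp
  have "q \<in> normal_line a (x, y) \<inter> (ellipse a - {(x, y)})" using assms p by simp
  thus ?thesis unfolding p normal_line_inter_ellipse[OF assms(1) e] normal_map_eq[OF assms(1) e] by simp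
qed

lemma normal_map_in_ellipse:
  assumes "a \<noteq> 0" and "p \<in> ellipse a"
  shows "normal_map a p \<in> ellipse a"
proof -
  obtain x y where p: "p = (x, y)" by fastforce
  have e: "(x, y) \<in> ellipse a" using assms(2) p by simp
  have "normal_map a p \<in> normal_line a (x, y) \<inter> (ellipse a - {(x, y)})"
    unfolding p normal_line_inter_ellipse[OF assms(1) e] normal_map_eq[OF assms(1) e] by simp
  thus ?thesis by simp
qed

lemma normal_scale_x_eq:
  assumes "b \<noteq> 0" "0 \<le> u" "u \<le> 1"
  shows "normal_scale_x b u = - ((2 - b) * b + u * (b - 1)^2) / (u + b^2 - u * b^2)"
proof -
  have R: "u + b^2 - u * b^2 \<noteq> 0" using normal_param_denom_pos[OF assms] by linarith
  have "normal_param b u = b * (- 2 * (u + b - u * b) / (u + b^2 - u * b^2))"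
    unfolding normal_param_def by (simp add: algebra_simps)
  hence "normal_scale_x b u = 1 + - 2 * (u + b - u * b) / (u + b^2 - u * b^2)"
    unfolding normal_scale_x_def using assms(1) by simp
  also have "\<dots> = (u + b^2 - u * b^2 - 2 * (u + b - u * b)) / (u + b^2 - u * b^2)"
    using R by (simp add: field_simps)
  also have "u + b^2 - u * b^2 - 2 * (u + b - u * b) = - ((2 - b) * b + u * (b - 1)^2)"
    by algebra
  finally show ?thesis .
qed

lemma normal_scale_y_eq:
  assumes "b \<noteq> 0" "0 \<le> u" "u \<le> 1"
  shows "normal_scale_y b u = - (b^2 - u * (b - 1)^2) / (u + b^2 - u * b^2)"
proof -
  have "u + b^2 - u * b^2 \<noteq> 0" using normal_param_denom_pos[OF assms] by linarith
  hence "normal_scale_y b u = (u + b^2 - u * b^2 - 2 * b * (u + b - u * b)) / (u + b^2 - u * b^2)"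
    unfolding normal_scale_y_def normal_param_def by (simp add: field_simps)
  also have "u + b^2 - u * b^2 - 2 * b * (u + b - u * b) = - (b^2 - u * (b - 1)^2)"
    by algebra
  finally show ?thesis .
qed

lemma normal_scales_sq_sum:
  assumes "b \<noteq> 0" "0 \<le> u" "u \<le> 1"
  shows "u * (normal_scale_x b u)^2 + (1 - u) * (normal_scale_y b u)^2 = 1"
proof -
  have quotient: "u * (- N1 / R)^2 + (1 - u) * (- N2 / R)^2 = 1"
    if "R \<noteq> 0" "u * N1^2 + (1 - u) * N2^2 = R^2" for N1 N2 R :: real
    using that by (simp add: field_simps)
  have "u * ((2 - b) * b + u * (b - 1)^2)^2 + (1 - u) * (b^2 - u * (b - 1)^2)^2 = (u + b^2 - u * b^2)^2"
    by algebra
  moreover have "u + b^2 - u * b^2 \<noteq> 0" using normal_param_denom_pos[OF assms] by linarith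
  ultimately show ?thesis
    unfolding normal_scale_x_eq[OF assms] normal_scale_y_eq[OF assms] by (rule quotient[rotated])
qed

lemma normal_scale_y_neg:
  assumes "1 < b" "0 \<le> u" "u \<le> 1"
  shows "normal_scale_y b u < 0"
proof -
  have "u * (b - 1)^2 \<le> (b - 1)^2" using assms by (simp add: mult_left_le_one_le)
  hence "0 < b^2 - u * (b - 1)^2" using assms by (simp add: power2_eq_square algebra_simps)
  moreover have "0 < u + b^2 - u * b^2" using normal_param_denom_pos[of b u] assms by simp
  moreover have "b \<noteq> 0" using assms(1) by simp
  ultimately show ?thesis
    unfolding normal_scale_y_eq[OF \<open>b \<noteq> 0\<close> assms(2,3)] using assms(1) by (intro divide_neg_pos) auto
qed

lemma normal_scale_x_nonpos:
  assumes "0 < b" "b \<le> 2" "0 \<le> u" "u \<le> 1"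
  shows "normal_scale_x b u \<le> 0"
proof -
  have "0 \<le> (2 - b) * b + u * (b - 1)^2" using assms by simp
  moreover have "0 < u + b^2 - u * b^2" using normal_param_denom_pos[of b u] assms by simp
  moreover have "b \<noteq> 0" using assms(1) by simp
  ultimately show ?thesis
    unfolding normal_scale_x_eq[OF \<open>b \<noteq> 0\<close> assms(3,4)] by (intro divide_nonpos_pos) auto
qed

lemma normal_scale_x_neg:
  assumes "1 < b" "b \<le> 2" "0 < u" "u \<le> 1"
  shows "normal_scale_x b u < 0"
proof -
  have "0 < u * (b - 1)^2" using assms by simp
  hence "0 < (2 - b) * b + u * (b - 1)^2" using assms by (smt (verit) mult_nonneg_nonneg)
  moreover have "0 < u + b^2 - u * b^2" using normal_param_denom_pos[of b u] assms by simp
  moreover have "b \<noteq> 0" using assms(1) by simp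
  ultimately show ?thesis
    unfolding normal_scale_x_eq[OF \<open>b \<noteq> 0\<close> less_imp_le[OF assms(3)] assms(4)]
    by (intro divide_neg_pos) auto
qed

lemma normal_scale_x_antimono:
  assumes "1 < b" "b \<le> 2" "0 \<le> u1" "u1 \<le> u2" "u2 \<le> 1"
  shows "normal_scale_x b u2 \<le> normal_scale_x b u1"
proof -
  have "0 \<le> (2 - b) * b + u2 * (b - 1)^2" using assms by simp
  moreover have "(2 - b) * b + u1 * (b - 1)^2 \<le> (2 - b) * b + u2 * (b - 1)^2"
    using assms by (simp add: mult_right_mono)
  moreover have "0 < u2 + b^2 - u2 * b^2" using normal_param_denom_pos[of b u2] assms by simp
  moreover have "u2 + b^2 - u2 * b^2 \<le> u1 + b^2 - u1 * b^2"
  proof -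
    have "1 \<le> b^2" using assms by simp
    hence "u1 * (b^2 - 1) \<le> u2 * (b^2 - 1)" using assms by (simp add: mult_right_mono)
    thus ?thesis by (simp add: algebra_simps)
  qed
  ultimately have "((2 - b) * b + u1 * (b - 1)^2) / (u1 + b^2 - u1 * b^2)
      \<le> ((2 - b) * b + u2 * (b - 1)^2) / (u2 + b^2 - u2 * b^2)"
    by (rule frac_le)
  moreover have "b \<noteq> 0" using assms(1) by simp
  ultimately show ?thesis
    unfolding normal_scale_x_eq[OF \<open>b \<noteq> 0\<close> order_trans[OF assms(3,4)] assms(5)]
      normal_scale_x_eq[OF \<open>b \<noteq> 0\<close> assms(3) order_trans[OF assms(4,5)]]
    by (simp only: minus_divide_left neg_le_iff_le)
qed

text \<open>The value of \<open>(X/a)\<^sup>2\<close> at the image \<open>(X,Y)\<close> of a point with \<open>(x/a)\<^sup>2 = u\<close>.\<close>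
definition normal_image_u :: "real \<Rightarrow> real \<Rightarrow> real" where
  "normal_image_u b u = u * (normal_scale_x b u)^2"

lemma normal_image_u_0 [simp]: "normal_image_u b 0 = 0"
  by (simp add: normal_image_u_def)

lemma normal_image_u_1:
  assumes "b \<noteq> 0"
  shows "normal_image_u b 1 = 1"
  using normal_scales_sq_sum[of b 1] assms by (simp add: normal_image_u_def)

lemma continuous_on_normal_image_u:
  assumes "b \<noteq> 0"
  shows "continuous_on {0..1} (normal_image_u b)"
proof -
  have "u + b^2 - u * b^2 \<noteq> 0" if "u \<in> {0..1}" for u
    using normal_param_denom_pos[of b u] assms that by auto
  thus ?thesis unfolding normal_image_u_def normal_scale_x_def normal_param_def
    using assms by (intro continuous_intros) auto
qed

lemma normal_image_u_strict_mono:
  assumes "1 < b" "b \<le> 2"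
  shows "strict_mono_on {0..1} (normal_image_u b)"
proof (rule strict_mono_onI)
  fix u1 u2 :: real assume u: "u1 \<in> {0..1}" "u2 \<in> {0..1}" "u1 < u2"
  have "normal_scale_x b u2 < 0" using normal_scale_x_neg[of b u2] assms u by simp
  moreover have "normal_scale_x b u2 \<le> normal_scale_x b u1" "normal_scale_x b u1 \<le> 0"
    using normal_scale_x_antimono[of b u1 u2] normal_scale_x_nonpos[of b u1] assms u by auto
  ultimately have "(- normal_scale_x b u1)^2 \<le> (- normal_scale_x b u2)^2"
    by (intro power_mono) auto
  hence "normal_image_u b u1 \<le> u1 * (normal_scale_x b u2)^2"
    using u by (simp add: normal_image_u_def mult_left_mono)
  also have "\<dots> < normal_image_u b u2"
    using \<open>normal_scale_x b u2 < 0\<close> u by (simp add: normal_image_u_def)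
  finally show "normal_image_u b u1 < normal_image_u b u2" .
qed

lemma normal_map_image_memI:
  assumes "1 < a" and q: "(X, Y) \<in> ellipse a" and u: "0 \<le> u" "u \<le> 1"
    and image_u: "normal_image_u (a^2) u = (X / a)^2" and sx: "normal_scale_x (a^2) u \<noteq> 0"
  shows "(X, Y) \<in> normal_map a ` ellipse a"
proof -
  have a0: "a \<noteq> 0" and b1: "1 < a^2" using assms by auto
  define sx sy where "sx = normal_scale_x (a^2) u" and "sy = normal_scale_y (a^2) u"
  have "sy \<noteq> 0" using normal_scale_y_neg[OF b1 u] by (simp add: sy_def)
  define x y where "x = X / sx" and "y = Y / sy"
  have "(x / a)^2 = (X / a)^2 / sx^2" by (simp add: x_def power_divide power_mult_distrib)
  also have "(X / a)^2 = u * sx^2" using image_u by (simp add: normal_image_u_def sx_def)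
  finally have xu: "(x / a)^2 = u" using sx by (simp add: sx_def)
  have "Y^2 = (1 - u) * sy^2"
    using q image_u normal_scales_sq_sum[of "a^2" u] u a0
    by (simp add: ellipse_iff normal_image_u_def sy_def)
  hence "y^2 = 1 - u" using \<open>sy \<noteq> 0\<close> by (simp add: y_def power_divide)
  hence e: "(x, y) \<in> ellipse a" using xu by (simp add: ellipse_iff)
  have "normal_map a (x, y) = (X, Y)"
    using normal_map_eq[OF a0 e] xu sx \<open>sy \<noteq> 0\<close> by (simp add: sx_def sy_def x_def y_def)
  thus ?thesis using e by force
qed

lemma normal_map_image:
  assumes "1 < a"
  shows "normal_map a ` ellipse a = ellipse a"
proof
  show "normal_map a ` ellipse a \<subseteq> ellipse a"
    using normal_map_in_ellipse assms by auto
next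
  have a0: "a \<noteq> 0" using assms by auto
  show "ellipse a \<subseteq> normal_map a ` ellipse a"
  proof (clarify)
    fix X Y assume q: "(X, Y) \<in> ellipse a"
    show "(X, Y) \<in> normal_map a ` ellipse a"
    proof (cases "X = 0")
      case True
      have e: "(0, - Y) \<in> ellipse a" using q True by (simp add: ellipse_iff)
      have "normal_scale_y (a^2) 0 = -1" using a0 by (simp add: normal_scale_y_eq)
      hence "normal_map a (0, - Y) = (X, Y)" using normal_map_eq[OF a0 e] True by simp
      thus ?thesis using e by force
    next
      case False
      have "0 \<le> (X / a)^2" "(X / a)^2 \<le> 1" using ellipse_x_sq_le_1[OF q] by simp_all
      then obtain u where u: "0 \<le> u" "u \<le> 1" "normal_image_u (a^2) u = (X / a)^2"
        using IVT'[of "normal_image_u (a^2)" 0 "(X / a)^2" 1] continuous_on_normal_image_u[of "a^2"]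
          normal_image_u_1[of "a^2"] a0 by auto
      moreover have "normal_scale_x (a^2) u \<noteq> 0"
        using u False a0 by (auto simp: normal_image_u_def)
      ultimately show ?thesis using normal_map_image_memI[OF assms q] by blast
    qed
  qed
qed

lemma inj_on_normal_map:
  assumes "1 < a" "a^2 \<le> 2"
  shows "inj_on (normal_map a) (ellipse a)"
proof (rule inj_onI)
  fix p1 p2 assume p1: "p1 \<in> ellipse a" and p2: "p2 \<in> ellipse a"
    and eq: "normal_map a p1 = normal_map a p2"
  obtain x1 y1 x2 y2 where p: "p1 = (x1, y1)" "p2 = (x2, y2)" by fastforce
  have a0: "a \<noteq> 0" and b1: "1 < a^2" using assms by auto
  define u1 u2 where "u1 = (x1 / a)^2" and "u2 = (x2 / a)^2"
  have u: "u1 \<in> {0..1}" "u2 \<in> {0..1}"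
    using ellipse_x_sq_le_1 p1 p2 p by (auto simp: u1_def u2_def)
  have x: "x1 * normal_scale_x (a^2) u1 = x2 * normal_scale_x (a^2) u2"
    and y: "y1 * normal_scale_y (a^2) u1 = y2 * normal_scale_y (a^2) u2"
    using eq normal_map_eq[OF a0] p1 p2 by (simp_all add: p u1_def u2_def)
  have "normal_image_u (a^2) ((x / a)^2) = (x * normal_scale_x (a^2) ((x / a)^2) / a)^2" for x
    by (simp add: normal_image_u_def power_mult_distrib power_divide)
  hence "normal_image_u (a^2) u1 = normal_image_u (a^2) u2"
    using x by (simp add: u1_def u2_def)
  hence "u1 = u2"
    using strict_mono_on_imp_inj_on[OF normal_image_u_strict_mono[OF b1 assms(2)]] u
    by (auto dest: inj_onD)
  moreover have "normal_scale_y (a^2) u2 \<noteq> 0" using normal_scale_y_neg[OF b1] u by force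
  moreover have "x1 = x2"
  proof (cases "u2 = 0")
    case True
    thus ?thesis using \<open>u1 = u2\<close> a0 by (simp add: u1_def u2_def)
  next
    case False
    hence "normal_scale_x (a^2) u2 \<noteq> 0" using normal_scale_x_neg[OF b1 assms(2)] u by force
    thus ?thesis using x \<open>u1 = u2\<close> by simp
  qed
  ultimately show "p1 = p2" using y p by simp
qed

lemma normal_map_not_inj_on:
  assumes "2 < a^2"
  shows "\<not> inj_on (normal_map a) (ellipse a)"
proof
  assume inj: "inj_on (normal_map a) (ellipse a)"
  have a0: "a \<noteq> 0" using assms by auto
  define y0 where "y0 = 1 / (a^2 - 1)"
  have y0: "0 < y0" "y0 < 1" using assms by (auto simp: y0_def field_simps)
  define x0 where "x0 = a * sqrt (1 - y0^2)"
  have "y0^2 < 1" using y0 by (simp add: power_less_one_iff)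
  hence "x0 \<noteq> 0" and p0: "(x0, y0) \<in> ellipse a"
    using a0 by (simp_all add: x0_def ellipse_iff power_mult_distrib)
  have top: "(0, 1) \<in> ellipse a" and bottom: "(0, -1) \<in> ellipse a"
    by (simp_all add: ellipse_iff)
  have "y0 + (- (a^2)) * y0 = -1" using assms by (simp add: y0_def field_simps)
  hence "(0, -1) \<in> normal_line a (x0, y0)"
    unfolding normal_line_def using a0 by (auto intro!: exI[of _ "- (a^2)"])
  hence "normal_map a (x0, y0) = (0, -1)"
    using normal_map_eqI[OF a0 p0 _ bottom] y0 by auto
  moreover have "(0, -1) \<in> normal_line a (0, 1)"
    unfolding normal_line_def by (auto intro!: exI[of _ "-2"])
  hence "normal_map a (0, 1) = (0, -1)"
    using normal_map_eqI[OF a0 top _ bottom] by auto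
  ultimately have "(x0, y0) = (0, 1)" using inj_onD[OF inj _ p0 top] by simp
  thus False using \<open>x0 \<noteq> 0\<close> by simp
qed

theorem mainTheorem14:
  fixes a :: real
  assumes "a > 1"
  shows "bij_betw (normal_map a) (ellipse a) (ellipse a) \<longleftrightarrow> a \<le> sqrt 2"
proof -
  have "a \<le> sqrt 2 \<longleftrightarrow> a^2 \<le> 2" using assms real_sqrt_le_iff[of "a^2" 2] by simp
  moreover have "inj_on (normal_map a) (ellipse a) \<longleftrightarrow> a^2 \<le> 2"
    using inj_on_normal_map normal_map_not_inj_on assms by (meson not_le)
  ultimately show ?thesis using normal_map_image[OF assms] by (simp add: bij_betw_def)
qed

end
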